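(* Let $\ell \geq 2$ and $s \geq 1$ be integers, and let $p_n/q_n$ ($n \ge 0$) be the $n$th convergent of the regular continued fraction of $$s e^{1/(\ell s)} = [s, \ell - 1, 1, 2s-1, 3\ell - 1, 1, 2s-1, 5\ell - 1, 1, 2s-1, \dots, (2k-1)\ell - 1, 1, 2s-1, \dots].$$ Then $$\sum_{n \geq 0} \left|p_n - s e^{1/(\ell s)} q_n\right| = e^{1/(\ell s)} \sqrt{\frac{\pi s}{\ell}}\, \operatorname{erf}\!\left(1/\sqrt{\ell s}\right).$$ Moreover, let $s \geq 1$ be an integer and let $p_n^*/q_n^*$ ($n\ge 0$) be the $n$th convergent of the regular continued fraction of $$s e^{1/s} = [s+1, 2s-1, 2, 1, 2s-1, 4, 1, \dots, 2s-1, 2k, 1, \dots].$$ Then $$\sum_{n \geq 0} \left|p_n^* - s e^{1/s} q_n^*\right| = e^{1/s} \sqrt{\pi s}\, \operatorname{erf}\!\left(1/\sqrt{s}\right) + s\left(1-e^{1/s}\right) - 1.$$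
   Context: The error function is $\operatorname{erf}(x) = \frac{2}{\sqrt{\pi}}\int_0^x e^{-t^2}\,dt$. For a real number $\alpha$ with regular continued fraction $[a_0,a_1,a_2,\dots]$, the $n$th convergent is $p_n/q_n = [a_0,\dots,a_n]$ in lowest terms, with $q_n>0$ (equivalently $p_{-1}=1,q_{-1}=0,p_0=a_0,q_0=1$, $p_n=a_np_{n-1}+p_{n-2}$, $q_n=a_nq_{n-1}+q_{n-2}$). *)

theory Defs
  imports "HOL-Analysis.Analysis"
begin

definition erf :: "real \<Rightarrow> real" where
  "erf x = 2 / sqrt pi * integral {0..x} (\<lambda>t. exp (- (t ^ 2)))"

fun cf_rem :: "real \<Rightarrow> nat \<Rightarrow> real" where
  "cf_rem \<alpha> 0 = \<alpha>"
| "cf_rem \<alpha> (Suc n) = 1 / frac (cf_rem \<alpha> n)"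

definition cf_a :: "real \<Rightarrow> nat \<Rightarrow> int" where
  "cf_a \<alpha> n = \<lfloor>cf_rem \<alpha> n\<rfloor>"

text \<open>Convergent numerators p_n and denominators q_n
  (p_{-1}=1, q_{-1}=0, p_0=a_0, q_0=1, standard recurrences).\<close>
fun cf_p :: "real \<Rightarrow> nat \<Rightarrow> int" where
  "cf_p \<alpha> 0 = cf_a \<alpha> 0"
| "cf_p \<alpha> (Suc 0) = cf_a \<alpha> 1 * cf_a \<alpha> 0 + 1"
| "cf_p \<alpha> (Suc (Suc n)) = cf_a \<alpha> (n + 2) * cf_p \<alpha> (n + 1) + cf_p \<alpha> n"

fun cf_q :: "real \<Rightarrow> nat \<Rightarrow> int" where
  "cf_q \<alpha> 0 = 1"
| "cf_q \<alpha> (Suc 0) = cf_a \<alpha> 1"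
| "cf_q \<alpha> (Suc (Suc n)) = cf_a \<alpha> (n + 2) * cf_q \<alpha> (n + 1) + cf_q \<alpha> n"

end

theory Submission
  imports Defs
begin

(* Put t = 1/(l s) and E k = t^k/k! * I(k,k), G k = t^(k+1)/k! * I(k,k+1), where
   I(a,b) is the integral of x^a (1-x)^b e^(tx) over [0,1]. Integration by parts gives
   E (k+1) = E k - 2 l s G k and G (k+1) = (2k+3) E (k+1) - G k, which are exactly the
   recurrences p_n - alpha q_n obeys for the claimed partial quotients, with errors
   -+E k / l, +-(E k / l - G k), -+G k in the three positions of the k-th period.
   Positivity of the integrals shows that these errors alternate in sign and decrease in
   absolute value, so the floor algorithm really produces these partial quotients.
   One period contributes 2 E k / l to the sum of absolute errors, and summing the
   exponential series under the integral turns the sum of the E k into the integral of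
   e^(t x (1 - x)) e^(t x), which the substitution u = sqrt t (1 - x) makes an erf value.
   For s e^(1/s) the errors are those of the case l = 1 shifted by two places. *)

lemma has_integral_of_real_derivative:
  fixes a b :: real
  assumes "a \<le> b" and "\<And>x. x \<in> {a..b} \<Longrightarrow> (F has_real_derivative f x) (at x)"
  shows "(f has_integral (F b - F a)) {a..b}"
  using assms by (intro fundamental_theorem_of_calculus)
    (auto intro: has_field_derivative_at_within
          simp: has_real_derivative_iff_has_vector_derivative[symmetric])

lemma sums_ungroup_nonneg:
  fixes f :: "nat \<Rightarrow> real"
  assumes "\<And>n. f n \<ge> 0" and "k > 0" and "(\<lambda>n. sum f {n * k..<n * k + k}) sums S"
  shows "f sums S"
proof -
  have partial_sums_bounded: "sum f {..n} \<le> S" for n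
  proof -
    have "Suc n \<le> Suc n * k" using mult_le_mono2[of 1 k "Suc n"] \<open>k > 0\<close> by simp
    then have "sum f {..n} \<le> sum f {..<Suc n * k}"
      using assms(1) by (intro sum_mono2) auto
    also have "\<dots> = (\<Sum>m<Suc n. sum f {m * k..<m * k + k})"
      by (rule sum.nat_group[symmetric])
    also have "\<dots> \<le> S"
      using assms sum_le_suminf[of "\<lambda>m. sum f {m * k..<m * k + k}" "{..<Suc n}"]
      by (auto simp: sums_iff intro: sum_nonneg)
    finally show ?thesis .
  qed
  have "summable f"
    using assms(1) partial_sums_bounded by (rule bounded_imp_summable)
  then have "(\<lambda>n. sum f {n * k..<n * k + k}) sums suminf f"
    using \<open>k > 0\<close> by (intro sums_group) auto
  then have "suminf f = S"
    using assms(3) sums_unique2 by blast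
  with \<open>summable f\<close> show ?thesis by (simp add: sums_iff)
qed

lemma div_mod_3:
  "Suc (3*k) div 3 = k" "Suc (3*k) mod 3 = 1" "Suc (Suc (3*k)) div 3 = k" "Suc (Suc (3*k)) mod 3 = 2"
  "Suc (Suc (Suc (3*k))) div 3 = Suc k" "Suc (Suc (Suc (3*k))) mod 3 = 0"
  by presburger+

lemma nat_cases_mod_3:
  fixes m :: nat
  obtains k where "m = 3*k" | k where "m = 3*k+1" | k where "m = 3*k+2"
proof -
  have "m = 3 * (m div 3) \<or> m = 3 * (m div 3) + 1 \<or> m = 3 * (m div 3) + 2"
    by presburger
  then show ?thesis
    using that by blast
qed

section \<open>The integrals of x^a (1-x)^b e^(tx) over the unit interval\<close>

definition beta_exp_integral :: "real \<Rightarrow> nat \<Rightarrow> nat \<Rightarrow> real" where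
  "beta_exp_integral t a b = integral {0..1} (\<lambda>x. x^a * (1-x)^b * exp (t*x))"

lemma has_integral_beta_exp_integral:
  "((\<lambda>x. x^a * (1-x)^b * exp (t*x)) has_integral beta_exp_integral t a b) {0..1}"
  unfolding beta_exp_integral_def
  by (intro integrable_integral integrable_continuous_real continuous_intros)

lemma beta_exp_integral_pos: "beta_exp_integral t a b > 0"
proof -
  let ?f = "\<lambda>x::real. x^a * (1-x)^b * exp (t*x)"
  have "beta_exp_integral t a b \<ge> 0"
    by (rule has_integral_nonneg[OF has_integral_beta_exp_integral]) auto
  moreover have "beta_exp_integral t a b \<noteq> 0"
  proof
    assume "beta_exp_integral t a b = 0"
    then have "(?f has_integral 0) (cbox 0 1)"
      using has_integral_beta_exp_integral[of a b t] by simp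
    then have "?f (1/2) = 0"
      by (intro has_integral_0_cbox_imp_0[of 0 1 ?f]) (auto intro!: continuous_intros)
    then show False by simp
  qed
  ultimately show ?thesis by linarith
qed

lemma beta_exp_integral_split:
  "beta_exp_integral t a (Suc b) + beta_exp_integral t (Suc a) b = beta_exp_integral t a b"
proof -
  have "((\<lambda>x. x^a * (1-x)^Suc b * exp (t*x) + x^Suc a * (1-x)^b * exp (t*x)) has_integral
      (beta_exp_integral t a (Suc b) + beta_exp_integral t (Suc a) b)) {0..1}"
    by (intro has_integral_add has_integral_beta_exp_integral)
  moreover have "(\<lambda>x. x^a * (1-x)^Suc b * exp (t*x) + x^Suc a * (1-x)^b * exp (t*x))
      = (\<lambda>x. x^a * (1-x)^b * exp (t*x))"
    by (simp add: algebra_simps)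
  ultimately show ?thesis
    using has_integral_beta_exp_integral[of a b t] has_integral_unique by metis
qed

lemma beta_exp_integral_by_parts:
  "(real a + 1) * beta_exp_integral t a (Suc b) - (real b + 1) * beta_exp_integral t (Suc a) b
     + t * beta_exp_integral t (Suc a) (Suc b) = 0"
proof -
  let ?F = "\<lambda>x::real. x^Suc a * (1-x)^Suc b * exp (t*x)"
  let ?f = "\<lambda>x::real. (real a + 1) * (x^a * (1-x)^Suc b * exp (t*x))
      - (real b + 1) * (x^Suc a * (1-x)^b * exp (t*x)) + t * (x^Suc a * (1-x)^Suc b * exp (t*x))"
  have "(?F has_real_derivative ?f x) (at x)" for x
    by (rule derivative_eq_intros refl | simp)+ (simp add: algebra_simps)
  then have "(?f has_integral 0) {0..1}"
    using has_integral_of_real_derivative[of 0 1 ?F ?f] by simp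
  moreover have "(?f has_integral ((real a + 1) * beta_exp_integral t a (Suc b)
      - (real b + 1) * beta_exp_integral t (Suc a) b + t * beta_exp_integral t (Suc a) (Suc b))) {0..1}"
    by (intro has_integral_add has_integral_diff has_integral_mult_right has_integral_beta_exp_integral)
  ultimately show ?thesis using has_integral_unique by blast
qed

lemma beta_exp_integral_0_0: "t * beta_exp_integral t 0 0 = exp t - 1"
proof -
  have "((\<lambda>x::real. exp (t*x)) has_real_derivative t * exp (t*x)) (at x)" for x
    by (rule derivative_eq_intros refl | simp)+
  then have "((\<lambda>x. t * exp (t*x)) has_integral (exp t - 1)) {0..1}"
    using has_integral_of_real_derivative[of 0 1 "\<lambda>x. exp (t*x)"] by simp
  moreover have "((\<lambda>x. t * exp (t*x)) has_integral (t * beta_exp_integral t 0 0)) {0..1}"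
    using has_integral_mult_right[OF has_integral_beta_exp_integral[of 0 0 t], of t] by simp
  ultimately show ?thesis using has_integral_unique by blast
qed

lemma beta_exp_integral_0_1: "t * beta_exp_integral t 0 1 = beta_exp_integral t 0 0 - 1"
proof -
  let ?f = "\<lambda>x::real. t * ((1-x) * exp (t*x)) - exp (t*x)"
  have "((\<lambda>x::real. (1-x) * exp (t*x)) has_real_derivative ?f x) (at x)" for x
    by (rule derivative_eq_intros refl | simp)+
  then have "(?f has_integral -1) {0..1}"
    using has_integral_of_real_derivative[of 0 1 "\<lambda>x. (1-x) * exp (t*x)" ?f] by simp
  moreover have "(?f has_integral (t * beta_exp_integral t 0 1 - beta_exp_integral t 0 0)) {0..1}"
    using has_integral_diff[OF has_integral_mult_right[OF has_integral_beta_exp_integral[of 0 1 t], of t]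
        has_integral_beta_exp_integral[of 0 0 t]]
    by simp
  ultimately have "t * beta_exp_integral t 0 1 - beta_exp_integral t 0 0 = -1"
    using has_integral_unique by blast
  then show ?thesis by simp
qed

lemma beta_exp_integral_diag_Suc:
  "t * beta_exp_integral t (Suc k) (Suc k)
     = (real k + 1) * (beta_exp_integral t k k - 2 * beta_exp_integral t k (Suc k))"
proof -
  have "beta_exp_integral t (Suc k) k = beta_exp_integral t k k - beta_exp_integral t k (Suc k)"
    using beta_exp_integral_split[of t k k] by linarith
  then have "t * beta_exp_integral t (Suc k) (Suc k)
      = (real k + 1) * (beta_exp_integral t k k - beta_exp_integral t k (Suc k))
        - (real k + 1) * beta_exp_integral t k (Suc k)"
    using beta_exp_integral_by_parts[where a=k and b=k and t=t] by simp
  then show ?thesis by (simp add: algebra_simps)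
qed

lemma beta_exp_integral_superdiag_Suc:
  "t * beta_exp_integral t (Suc k) (Suc (Suc k))
     = (2 * real k + 3) * beta_exp_integral t (Suc k) (Suc k) - (real k + 1) * beta_exp_integral t k (Suc k)"
proof -
  have "beta_exp_integral t k (Suc (Suc k)) = beta_exp_integral t k (Suc k) - beta_exp_integral t (Suc k) (Suc k)"
    using beta_exp_integral_split[of t k "Suc k"] by linarith
  then have "t * beta_exp_integral t (Suc k) (Suc (Suc k))
      = (2 + real k) * beta_exp_integral t (Suc k) (Suc k)
        - (real k + 1) * (beta_exp_integral t k (Suc k) - beta_exp_integral t (Suc k) (Suc k))"
    using beta_exp_integral_by_parts[where a=k and b="Suc k" and t=t] by simp
  then show ?thesis by (simp add: algebra_simps)
qed

lemma beta_exp_integral_diag_sums: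
  "(\<lambda>k. t^k / fact k * beta_exp_integral t k k)
     sums integral {0..1} (\<lambda>x. exp (t * (x * (1-x))) * exp (t*x))"
proof -
  define f where "f = (\<lambda>k (x::real). (t * (x * (1-x)))^k / fact k * exp (t*x))"
  have f_integral: "(f k has_integral t^k / fact k * beta_exp_integral t k k) {0..1}" for k
    using has_integral_mult_right[OF has_integral_beta_exp_integral[of k k t], of "t^k / fact k"]
    by (simp add: f_def power_mult_distrib mult_ac)
  define M where "M k = inverse (fact k) * \<bar>t\<bar>^k * exp \<bar>t\<bar>" for k
  have bound: "norm (f k x) \<le> M k" if "x \<in> {0..1}" for k x
  proof -
    have "\<bar>x * (1-x)\<bar> \<le> 1" using that by (auto simp: abs_of_nonneg mult_le_one)
    then have "\<bar>t * (x * (1-x))\<bar> \<le> \<bar>t\<bar>"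
      by (metis abs_mult abs_ge_zero mult_left_le)
    then have "\<bar>t * (x * (1-x))\<bar>^k \<le> \<bar>t\<bar>^k"
      by (intro power_mono) auto
    moreover have "t*x \<le> \<bar>t\<bar> * \<bar>x\<bar>" by (metis abs_ge_self abs_mult)
    then have "exp (t*x) \<le> exp \<bar>t\<bar>"
      using that mult_left_le[of x "\<bar>t\<bar>"] by simp
    ultimately have "\<bar>t * (x * (1-x))\<bar>^k * exp (t*x) \<le> \<bar>t\<bar>^k * exp \<bar>t\<bar>"
      by (intro mult_mono) auto
    then show ?thesis by (simp add: f_def M_def abs_mult power_abs divide_inverse mult_ac)
  qed
  have "summable M"
    unfolding M_def using summable_mult2[OF summable_exp[of "\<bar>t\<bar>"], of "exp \<bar>t\<bar>"] by simp
  then have uniform: "uniform_limit {0..1} (\<lambda>n x. \<Sum>k<n. f k x) (\<lambda>x. \<Sum>k. f k x) sequentially"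
    using bound by (rule Weierstrass_m_test[rotated])
  have "continuous_on {0..1} (\<lambda>x. \<Sum>k<n. f k x)" for n
    unfolding f_def by (intro continuous_intros) auto
  then obtain I J where
    I: "\<And>n. ((\<lambda>x. \<Sum>k<n. f k x) has_integral I n) {0..1}" and
    J: "((\<lambda>x. \<Sum>k. f k x) has_integral J) {0..1}" and "I \<longlonglongrightarrow> J"
    using uniform_limit_integral[OF uniform] by auto
  have "((\<lambda>x. \<Sum>k<n. f k x) has_integral (\<Sum>k<n. t^k / fact k * beta_exp_integral t k k)) {0..1}" for n
    by (rule has_integral_sum[OF finite_lessThan f_integral])
  then have "I = (\<lambda>n. \<Sum>k<n. t^k / fact k * beta_exp_integral t k k)"
    using I has_integral_unique by blast
  then have "(\<lambda>k. t^k / fact k * beta_exp_integral t k k) sums J"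
    using \<open>I \<longlonglongrightarrow> J\<close> unfolding sums_def by simp
  moreover have "(\<lambda>k. f k x) sums (exp (t * (x * (1-x))) * exp (t*x))" for x
    using sums_mult2[OF exp_converges[of "t * (x * (1-x))"], of "exp (t*x)"]
    by (simp add: f_def divide_inverse mult.commute)
  then have "(\<lambda>x. \<Sum>k. f k x) = (\<lambda>x. exp (t * (x * (1-x))) * exp (t*x))"
    by (auto intro!: sums_unique[symmetric])
  with J have "J = integral {0..1} (\<lambda>x. exp (t * (x * (1-x))) * exp (t*x))"
    by (simp add: integral_unique)
  ultimately show ?thesis by simp
qed

text \<open>The substitution u = sqrt \<tau> (1 - x) turns the exponent \<tau> x (1 - x) + \<tau> x into \<tau> - u^2.\<close>

lemma has_integral_exp_parabola:
  fixes \<tau> :: real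
  assumes "\<tau> > 0"
  shows "((\<lambda>x. exp (\<tau> * (x * (1-x))) * exp (\<tau>*x)) has_integral
           exp \<tau> * sqrt pi / (2 * sqrt \<tau>) * erf (sqrt \<tau>)) {0..1}"
proof -
  define g where "g = (\<lambda>u::real. exp (-(u^2)))"
  define r where "r = sqrt \<tau>"
  define \<Psi> where "\<Psi> z = integral {-1..z} g" for z
  have "r > 0" "r^2 = \<tau>" using assms by (simp_all add: r_def)
  have g_cont: "continuous_on {a..b} g" for a b unfolding g_def by (intro continuous_intros)
  have \<Psi>_deriv: "(\<Psi> has_real_derivative g z) (at z)" if "z \<in> {0..r}" for z
  proof -
    have "(\<Psi> has_real_derivative g z) (at z within {-1..r+1})"
      unfolding \<Psi>_def by (rule integral_has_real_derivative[OF g_cont]) (use that in auto)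
    moreover have "at z within {-1..r+1} = at z"
      by (rule at_within_interior) (use that in auto)
    ultimately show ?thesis by simp
  qed
  define F where "F x = - (exp \<tau> / r) * \<Psi> (r * (1-x))" for x
  have "(F has_real_derivative exp (\<tau> * (x * (1-x))) * exp (\<tau>*x)) (at x)" if "x \<in> {0..1}" for x
  proof -
    have "r * (1-x) \<in> {0..r}" using that \<open>r > 0\<close> by (auto simp: mult_le_cancel_left1)
    moreover have "((\<lambda>x. r * (1-x)) has_real_derivative -r) (at x)"
      by (auto intro!: derivative_eq_intros)
    ultimately have "(F has_real_derivative - (exp \<tau> / r) * (g (r * (1-x)) * (-r))) (at x)"
      unfolding F_def by (intro DERIV_cmult DERIV_chain2[OF \<Psi>_deriv])
    moreover have "(r * (1-x))^2 = \<tau> * (1-x)^2"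
      using \<open>r^2 = \<tau>\<close> by (simp add: power_mult_distrib)
    then have "- (exp \<tau> / r) * (g (r * (1-x)) * (-r)) = exp \<tau> * exp (- (\<tau> * (1-x)^2))"
      unfolding g_def using \<open>r > 0\<close> by simp
    moreover have "exp \<tau> * exp (- (\<tau> * (1-x)^2)) = exp (\<tau> * (x * (1-x))) * exp (\<tau>*x)"
      unfolding exp_add[symmetric] by (simp add: algebra_simps power2_eq_square)
    ultimately show ?thesis by simp
  qed
  then have integral_F: "((\<lambda>x. exp (\<tau> * (x * (1-x))) * exp (\<tau>*x)) has_integral (F 1 - F 0)) {0..1}"
    by (intro has_integral_of_real_derivative) auto
  have "\<Psi> r - \<Psi> 0 = integral {0..r} g"
    using Henstock_Kurzweil_Integration.integral_combine[where a="-1" and c=0 and b=r and f=g]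
      \<open>r > 0\<close> integrable_continuous_real[OF g_cont]
    by (simp add: \<Psi>_def)
  moreover have "F 1 - F 0 = exp \<tau> / r * (\<Psi> r - \<Psi> 0)"
    by (simp add: F_def algebra_simps)
  ultimately have "F 1 - F 0 = exp \<tau> * sqrt pi / (2 * sqrt \<tau>) * erf (sqrt \<tau>)"
    by (simp add: erf_def g_def r_def)
  with integral_F show ?thesis by simp
qed

section \<open>Recognising a continued fraction from its errors\<close>

text \<open>If \<rho> satisfies the recurrence of the convergents with consecutive ratios in (-1,0),
  then the complete quotients of \<alpha> are -\<rho> n / \<rho> (n+1), and \<rho> (n+2) is the error of
  the n-th convergent.\<close>

locale cf_error_sequence =
  fixes \<alpha> :: real and A :: "nat \<Rightarrow> int" and \<rho> :: "nat \<Rightarrow> real"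
  assumes error_0: "\<rho> 0 = -\<alpha>" and error_1: "\<rho> 1 = 1"
    and error_recurrence: "\<And>n. \<rho> (n+2) = A n * \<rho> (n+1) + \<rho> n"
    and error_ratio_pos: "\<And>n. 0 < - \<rho> (n+2) / \<rho> (n+1)"
    and error_ratio_less_1: "\<And>n. - \<rho> (n+2) / \<rho> (n+1) < 1"
begin

lemma error_nonzero: "\<rho> (n+1) \<noteq> 0"
  using error_ratio_pos[of n] by auto

lemma complete_quotient_split: "- \<rho> n / \<rho> (n+1) = A n + (- \<rho> (n+2) / \<rho> (n+1))"
  using error_nonzero[of n] error_recurrence[of n] by (simp add: field_simps)

lemma cf_rem_eq: "cf_rem \<alpha> n = - \<rho> n / \<rho> (n+1)"
proof (induction n)
  case 0
  show ?case using error_0 error_1 by simp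
next
  case (Suc n)
  have "frac (- \<rho> n / \<rho> (n+1)) = - \<rho> (n+2) / \<rho> (n+1)"
    unfolding complete_quotient_split frac_add_of_int_left
    using error_ratio_pos[of n] error_ratio_less_1[of n] by (simp add: frac_eq)
  then show ?case
    unfolding cf_rem.simps Suc.IH using error_nonzero[of "Suc n"] by (simp add: field_simps)
qed

lemma cf_a_eq: "cf_a \<alpha> n = A n"
  unfolding cf_a_def cf_rem_eq complete_quotient_split
  using error_ratio_pos[of n] error_ratio_less_1[of n] by (simp add: floor_eq_iff)

lemma cf_error_eq: "cf_p \<alpha> n - \<alpha> * cf_q \<alpha> n = \<rho> (n+2)"
proof -
  have "cf_p \<alpha> n - \<alpha> * cf_q \<alpha> n = \<rho> (n+2) \<and> cf_p \<alpha> (n+1) - \<alpha> * cf_q \<alpha> (n+1) = \<rho> (n+3)"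
  proof (induction n)
    case 0
    have "real_of_int (A 0) = \<alpha> + \<rho> 2"
      using error_recurrence[of 0] error_0 error_1 by (simp add: eval_nat_numeral)
    moreover have "\<rho> 3 = A 1 * \<rho> 2 + 1"
      using error_recurrence[of 1] error_1 by (simp add: eval_nat_numeral)
    ultimately show ?case by (simp add: cf_a_eq algebra_simps eval_nat_numeral)
  next
    case (Suc n)
    have "cf_p \<alpha> (n+2) - \<alpha> * cf_q \<alpha> (n+2)
        = A (n+2) * (cf_p \<alpha> (n+1) - \<alpha> * cf_q \<alpha> (n+1)) + (cf_p \<alpha> n - \<alpha> * cf_q \<alpha> n)"
      by (simp add: cf_a_eq algebra_simps)
    then show ?case
      using Suc.IH error_recurrence[of "n+2"] by (simp add: eval_nat_numeral)
  qed
  then show ?thesis ..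
qed

end

section \<open>The errors of the convergents of s e^(1/(l s))\<close>

locale scaled_exp_cf =
  fixes l s :: nat
  assumes l_pos: "l > 0" and s_pos: "s > 0"
begin

definition t :: real where "t = 1 / (real l * real s)"

definition E :: "nat \<Rightarrow> real" where
  "E k = t^k * beta_exp_integral t k k / fact k"

definition G :: "nat \<Rightarrow> real" where
  "G k = t^Suc k * beta_exp_integral t k (Suc k) / fact k"

text \<open>The n-th error p_n - \<alpha> q_n for \<alpha> = s e^t, and the partial quotients
  [s; l-1, 1, 2s-1, 3l-1, 1, 2s-1, ...].\<close>

definition err :: "nat \<Rightarrow> real" where
  "err n = (let k = n div 3 in
     if n mod 3 = 0 then (-1)^(k+1) * E k / l
     else if n mod 3 = 1 then (-1)^k * (E k / l - G k)
     else (-1)^(k+1) * G k)"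

definition partial_quot :: "nat \<Rightarrow> int" where
  "partial_quot n =
     (if n = 0 then int s
      else if n mod 3 = 1 then (2 * int (n div 3) + 1) * int l - 1
      else if n mod 3 = 2 then 1
      else 2 * int s - 1)"

lemma t_pos: "t > 0"
  using l_pos s_pos by (simp add: t_def)

lemma l_s_t: "real l * real s * t = 1"
  using l_pos s_pos by (simp add: t_def)

lemma err_3k: "err (3*k) = (-1)^(k+1) * E k / l"
  and err_3k_1: "err (3*k+1) = (-1)^k * (E k / l - G k)"
  and err_3k_2: "err (3*k+2) = (-1)^(k+1) * G k"
  by (simp_all add: err_def div_mod_3)

lemma partial_quot_3k_1: "partial_quot (3*k+1) = (2 * int k + 1) * int l - 1"
  and partial_quot_3k_2: "partial_quot (3*k+2) = 1"
  and partial_quot_3k_3: "partial_quot (3 * Suc k) = 2 * int s - 1"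
  by (simp_all add: partial_quot_def div_mod_3)

lemma E_pos: "E k > 0"
  using t_pos beta_exp_integral_pos by (simp add: E_def)

lemma G_pos: "G k > 0"
  using t_pos beta_exp_integral_pos by (simp add: G_def)

lemma E_0: "E 0 = (exp t - 1) / t"
  using beta_exp_integral_0_0[of t] t_pos by (simp add: E_def field_simps)

lemma G_0: "G 0 = E 0 - 1"
  using beta_exp_integral_0_1[of t] by (simp add: E_def G_def)

lemma E_Suc: "E (Suc k) = E k - 2 * real l * real s * G k"
proof -
  have "E (Suc k) = t^k * (t * beta_exp_integral t (Suc k) (Suc k)) / ((real k + 1) * fact k)"
    by (simp add: E_def mult_ac)
  also have "\<dots> = (real k + 1) * (t^k * (beta_exp_integral t k k - 2 * beta_exp_integral t k (Suc k)))
      / ((real k + 1) * fact k)"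
    unfolding beta_exp_integral_diag_Suc by (simp add: mult_ac)
  also have "\<dots> = t^k * (beta_exp_integral t k k - 2 * beta_exp_integral t k (Suc k)) / fact k"
    by (rule mult_divide_mult_cancel_left) simp
  also have "\<dots> = E k - 2 * (real l * real s * t) * (t^k * beta_exp_integral t k (Suc k) / fact k)"
    by (simp add: E_def l_s_t right_diff_distrib diff_divide_distrib)
  finally show ?thesis by (simp add: G_def mult_ac)
qed

lemma G_Suc: "G (Suc k) = (2 * real k + 3) * E (Suc k) - G k"
proof -
  have "G (Suc k) = t^Suc k * (t * beta_exp_integral t (Suc k) (Suc (Suc k))) / ((real k + 1) * fact k)"
    by (simp add: G_def mult_ac)
  also have "\<dots> = (2 * real k + 3) * (t^Suc k * beta_exp_integral t (Suc k) (Suc k) / ((real k + 1) * fact k))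
      - (real k + 1) * (t^Suc k * beta_exp_integral t k (Suc k)) / ((real k + 1) * fact k)"
    unfolding beta_exp_integral_superdiag_Suc by (simp add: algebra_simps diff_divide_distrib)
  also have "(real k + 1) * (t^Suc k * beta_exp_integral t k (Suc k)) / ((real k + 1) * fact k) = G k"
    unfolding G_def by (rule mult_divide_mult_cancel_left) simp
  finally show ?thesis by (simp add: E_def)
qed

lemma two_G_less: "2 * G k < E k / l"
proof -
  have "G k \<le> real s * G k"
    using s_pos G_pos[of k] by (simp add: mult_le_cancel_right1)
  then have "2 * real l * G k \<le> 2 * real l * real s * G k"
    using mult_left_mono[of "G k" "real s * G k" "2 * real l"] by (simp add: mult_ac)
  also have "\<dots> < E k"
    using E_Suc[of k] E_pos[of "Suc k"] by linarith
  finally show ?thesis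
    using l_pos by (simp add: field_simps)
qed

lemma E_Suc_less: "E (Suc k) / l < G k"
proof -
  have "beta_exp_integral t (Suc k) (Suc k) < beta_exp_integral t k (Suc k)"
    using beta_exp_integral_split[of t k "Suc k"] beta_exp_integral_pos[of t k "Suc (Suc k)"] by linarith
  also have "\<dots> \<le> real l * (real k + 1) * beta_exp_integral t k (Suc k)"
    using l_pos mult_mono[of 1 "real l" 1 "real k + 1"] beta_exp_integral_pos[of t k "Suc k"]
    by (simp add: mult_le_cancel_right1)
  finally have "E (Suc k) < t^Suc k * (real l * (real k + 1) * beta_exp_integral t k (Suc k)) / fact (Suc k)"
    unfolding E_def using t_pos by (intro divide_strict_right_mono mult_strict_left_mono) auto
  also have "\<dots> = real l * G k"
    by (simp add: G_def add_nonneg_eq_0_iff field_simps)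
  finally show ?thesis
    using l_pos by (simp add: divide_less_eq mult.commute)
qed

lemma err_0: "err 0 = real s - real s * exp t"
proof -
  have "t * real l = 1 / real s"
    using l_s_t s_pos by (simp add: field_simps)
  then have "E 0 / l = real s * (exp t - 1)"
    by (simp add: E_0)
  then show ?thesis
    using err_3k[of 0] by (simp add: algebra_simps)
qed

lemma err_1: "err 1 = (real l - 1) * err 0 + 1"
proof -
  have "(real l - 1) * (E 0 / l) = E 0 - E 0 / l"
    using l_pos by (simp add: field_simps)
  then show ?thesis
    using err_3k[of 0] err_3k_1[of 0] G_0 by (simp add: algebra_simps)
qed

lemma err_recurrence_3k: "err (3*k+2) = partial_quot (3*k+2) * err (3*k+1) + err (3*k)"
  unfolding err_3k err_3k_1 err_3k_2 partial_quot_3k_2 by (simp add: algebra_simps)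

lemma err_recurrence_3k_1: "err (3 * Suc k) = partial_quot (3 * Suc k) * err (3*k+2) + err (3*k+1)"
proof -
  have "err (3 * Suc k) = (-1)^k * (E k / l - 2 * real s * G k)"
    unfolding err_3k using l_pos by (simp add: E_Suc field_simps)
  then show ?thesis
    unfolding partial_quot_3k_3 err_3k_1 err_3k_2 by (simp add: algebra_simps)
qed

lemma err_recurrence_3k_2: "err (3 * Suc k + 1) = partial_quot (3 * Suc k + 1) * err (3 * Suc k) + err (3*k+2)"
proof -
  have "err (3 * Suc k + 1) = (-1)^Suc k * (E (Suc k) / l - (2 * real k + 3) * E (Suc k) + G k)"
    unfolding err_3k_1 by (simp add: G_Suc algebra_simps)
  also have "\<dots> = ((2 * real (Suc k) + 1) * real l - 1) * ((-1)^(Suc k + 1) * E (Suc k) / l)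
      + (-1)^(k+1) * G k"
    using l_pos by (simp add: field_simps)
  finally show ?thesis
    unfolding partial_quot_3k_1 err_3k err_3k_2 by simp
qed

lemma err_recurrence: "err (m+2) = partial_quot (m+2) * err (m+1) + err m"
proof (cases m rule: nat_cases_mod_3)
  case (1 k)
  then show ?thesis using err_recurrence_3k[of k] by simp
next
  case (2 k)
  then have "m+2 = 3 * Suc k" "m+1 = 3*k+2" by simp_all
  then show ?thesis using 2 err_recurrence_3k_1[of k] by (simp only:)
next
  case (3 k)
  then have "m+2 = 3 * Suc k + 1" "m+1 = 3 * Suc k" by simp_all
  then show ?thesis using 3 err_recurrence_3k_2[of k] by (simp only:)
qed

lemma err_ratio_3k: "0 < - err (3*k+1) / err (3*k) \<and> - err (3*k+1) / err (3*k) < 1"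
proof -
  have "- err (3*k+1) / err (3*k) = (E k / l - G k) / (E k / l)"
    unfolding err_3k err_3k_1 by simp
  moreover have "0 < E k / l - G k" "E k / l - G k < E k / l"
    using G_pos[of k] two_G_less[of k] by linarith+
  ultimately show ?thesis
    by (metis divide_pos_pos divide_less_eq_1_pos order.strict_trans)
qed

lemma err_ratio_3k_1: "0 < - err (3*k+2) / err (3*k+1) \<and> - err (3*k+2) / err (3*k+1) < 1"
proof -
  have "- err (3*k+2) / err (3*k+1) = G k / (E k / l - G k)"
    unfolding err_3k_1 err_3k_2 by simp
  moreover have "0 < G k" "G k < E k / l - G k"
    using G_pos[of k] two_G_less[of k] by linarith+
  ultimately show ?thesis
    by (metis divide_pos_pos divide_less_eq_1_pos order.strict_trans)
qed

lemma err_ratio_3k_2: "0 < - err (3 * Suc k) / err (3*k+2) \<and> - err (3 * Suc k) / err (3*k+2) < 1"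
proof -
  have "- err (3 * Suc k) / err (3*k+2) = (E (Suc k) / l) / G k"
    unfolding err_3k err_3k_2 by simp
  moreover have "0 < E (Suc k) / l"
    using E_pos[of "Suc k"] l_pos by simp
  ultimately show ?thesis
    using E_Suc_less[of k] by (metis divide_pos_pos divide_less_eq_1_pos order.strict_trans)
qed

lemma err_ratio: "0 < - err (m+1) / err m \<and> - err (m+1) / err m < 1"
proof (cases m rule: nat_cases_mod_3)
  case (1 k)
  then show ?thesis using err_ratio_3k[of k] by simp
next
  case (2 k)
  then have "m+1 = 3*k+2" by simp
  then show ?thesis using 2 err_ratio_3k_1[of k] by (simp only:)
next
  case (3 k)
  then have "m+1 = 3 * Suc k" by simp
  then show ?thesis using 3 err_ratio_3k_2[of k] by (simp only:)
qed

lemma E_sums: "E sums (exp t * sqrt pi / (2 * sqrt t) * erf (sqrt t))"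
proof -
  have "E = (\<lambda>k. t^k / fact k * beta_exp_integral t k k)"
    by (simp add: E_def fun_eq_iff)
  then show ?thesis
    using beta_exp_integral_diag_sums[of t] integral_unique[OF has_integral_exp_parabola[OF t_pos]]
    by simp
qed

lemma abs_err_sums: "(\<lambda>n. \<bar>err n\<bar>) sums (exp t * sqrt (pi * real s / real l) * erf (1 / sqrt (real l * real s)))"
proof (rule sums_ungroup_nonneg[where k=3])
  have "sum (\<lambda>n. \<bar>err n\<bar>) {k * 3..<k * 3 + 3} = 2 / l * E k" for k
  proof -
    have "\<bar>err (3*k)\<bar> = E k / l" "\<bar>err (3*k+1)\<bar> = E k / l - G k" "\<bar>err (3*k+2)\<bar> = G k"
      unfolding err_3k err_3k_1 err_3k_2
      using E_pos[of k] G_pos[of k] two_G_less[of k] l_pos by (simp_all add: abs_mult)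
    then show ?thesis
      by (simp add: eval_nat_numeral mult.commute)
  qed
  moreover have "2 / l * (exp t * sqrt pi / (2 * sqrt t) * erf (sqrt t))
      = exp t * sqrt (pi * real s / real l) * erf (1 / sqrt (real l * real s))"
  proof -
    have "2 / l * (sqrt pi / (2 * sqrt t)) = sqrt pi * sqrt s * (sqrt l / (sqrt l * sqrt l))"
      using l_pos s_pos by (simp add: t_def real_sqrt_mult real_sqrt_divide)
    also have "\<dots> = sqrt (pi * real s / real l)"
      using l_pos s_pos by (simp add: real_sqrt_mult real_sqrt_divide del: real_sqrt_mult_self)
    finally have "exp t * (2 / l * (sqrt pi / (2 * sqrt t))) * erf (sqrt t)
        = exp t * sqrt (pi * real s / real l) * erf (1 / sqrt (real l * real s))"
      by (simp add: t_def real_sqrt_divide)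
    then show ?thesis
      by (simp add: mult_ac)
  qed
  ultimately show "(\<lambda>k. sum (\<lambda>n. \<bar>err n\<bar>) {k * 3..<k * 3 + 3})
      sums (exp t * sqrt (pi * real s / real l) * erf (1 / sqrt (real l * real s)))"
    using sums_mult[OF E_sums, of "2 / l"] by simp
qed auto

lemma E_0_less: assumes "l \<ge> 2" shows "E 0 < l"
proof -
  have "(2 * real l - 1) * E 0 < 2 * real l"
    using two_G_less[of 0] G_0 l_pos by (simp add: field_simps)
  also have "\<dots> \<le> (2 * real l - 1) * real l"
    using assms mult_right_mono[of 2 "real l" "real l"] by (simp add: algebra_simps)
  finally show ?thesis
    using assms by (simp add: mult_less_cancel_left_pos)
qed

lemma cf_error_eq_err:
  assumes "l \<ge> 2"
  shows "cf_p (real s * exp t) n - real s * exp t * cf_q (real s * exp t) n = err n"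
proof -
  define \<alpha> where "\<alpha> = real s * exp t"
  define \<rho> where "\<rho> n = (if n = 0 then -\<alpha> else if n = 1 then 1 else err (n - 2))" for n
  have ratio: "0 < - \<rho> (n+2) / \<rho> (n+1) \<and> - \<rho> (n+2) / \<rho> (n+1) < 1" for n
  proof (cases n)
    case 0
    have "- \<rho> (n+2) / \<rho> (n+1) = E 0 / l"
      using 0 err_3k[of 0] by (simp add: \<rho>_def)
    moreover have "0 < E 0 / l" "E 0 / l < 1"
      using E_pos[of 0] E_0_less[OF assms] by simp_all
    ultimately show ?thesis
      by (simp only:)
  next
    case (Suc m)
    then show ?thesis
      using err_ratio[of m] by (simp add: \<rho>_def)
  qed
  interpret cf_error_sequence \<alpha> partial_quot \<rho>
  proof
    show "\<rho> 0 = - \<alpha>" "\<rho> 1 = 1"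
      by (simp_all add: \<rho>_def)
    show "\<rho> (n+2) = partial_quot n * \<rho> (n+1) + \<rho> n" for n
    proof (cases n)
      case 0
      then show ?thesis using err_0 by (simp add: \<rho>_def \<alpha>_def partial_quot_def)
    next
      case (Suc m)
      then show ?thesis
        using err_1 partial_quot_3k_1[of 0] err_recurrence[of "m - 1"]
        by (cases m) (simp_all add: \<rho>_def)
    qed
    show "0 < - \<rho> (n+2) / \<rho> (n+1)" "- \<rho> (n+2) / \<rho> (n+1) < 1" for n
      using ratio[of n] by simp_all
  qed
  show ?thesis
    using cf_error_eq[of n] by (simp add: \<rho>_def \<alpha>_def)
qed

lemma cf_error_eq_err_Suc_Suc:
  assumes "l = 1"
  shows "cf_p (real s * exp t) n - real s * exp t * cf_q (real s * exp t) n = err (n+2)"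
proof -
  define \<alpha> where "\<alpha> = real s * exp t"
  define A where "A n = (if n = 0 then int s + 1 else partial_quot (n+2))" for n
  define \<rho> where "\<rho> n = (if n = 0 then -\<alpha> else err n)" for n
  have "err 1 = 1"
    using err_1 assms by simp
  interpret cf_error_sequence \<alpha> A \<rho>
  proof
    show "\<rho> 0 = - \<alpha>" "\<rho> 1 = 1"
      using \<open>err 1 = 1\<close> by (simp_all add: \<rho>_def)
    show "\<rho> (n+2) = A n * \<rho> (n+1) + \<rho> n" for n
      using err_recurrence[of n] err_0 \<open>err 1 = 1\<close> partial_quot_3k_2[of 0]
      by (cases "n = 0") (simp_all add: \<rho>_def A_def \<alpha>_def)
    show "0 < - \<rho> (n+2) / \<rho> (n+1)" "- \<rho> (n+2) / \<rho> (n+1) < 1" for n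
      using err_ratio[of "n+1"] by (simp_all add: \<rho>_def)
  qed
  show ?thesis
    using cf_error_eq[of n] by (simp add: \<rho>_def \<alpha>_def)
qed

lemma sum_abs_cf_errors:
  assumes "l \<ge> 2"
  shows "(\<lambda>n. \<bar>real_of_int (cf_p (real s * exp (1 / (real l * real s))) n)
      - real s * exp (1 / (real l * real s)) * real_of_int (cf_q (real s * exp (1 / (real l * real s))) n)\<bar>)
    sums (exp (1 / (real l * real s)) * sqrt (pi * real s / real l) * erf (1 / sqrt (real l * real s)))"
  using abs_err_sums cf_error_eq_err[OF assms] by (simp add: t_def)

lemma sum_abs_cf_errors_l_1:
  assumes "l = 1"
  shows "(\<lambda>n. \<bar>real_of_int (cf_p (real s * exp (1 / real s)) n)
      - real s * exp (1 / real s) * real_of_int (cf_q (real s * exp (1 / real s)) n)\<bar>)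
    sums (exp (1 / real s) * sqrt (pi * real s) * erf (1 / sqrt (real s))
      + real s * (1 - exp (1 / real s)) - 1)"
proof -
  have t: "t = 1 / real s" and l: "pi * real s / real l = pi * real s" "real l * real s = real s"
    unfolding t_def using assms by simp_all
  have "real s \<le> real s * exp t"
    using t_pos by (simp add: mult_le_cancel_left1)
  then have "(\<Sum>i<2. \<bar>err i\<bar>) = real s * (exp t - 1) + 1"
    using err_0 err_1 assms by (simp add: eval_nat_numeral algebra_simps)
  then have "(\<lambda>n. \<bar>err (n+2)\<bar>) sums
      (exp t * sqrt (pi * s) * erf (1 / sqrt s) - (real s * (exp t - 1) + 1))"
    using sums_split_initial_segment[OF abs_err_sums, of 2] unfolding l by simp
  moreover have "cf_p (real s * exp (1 / real s)) n - real s * exp (1 / real s) * cf_q (real s * exp (1 / real s)) n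
      = err (n+2)" for n
    using cf_error_eq_err_Suc_Suc[OF assms] unfolding t .
  ultimately show ?thesis
    unfolding t by (simp add: algebra_simps)
qed

end

theorem theorem3:
  shows "(\<forall>(l::nat) (s::nat). l \<ge> 2 \<and> s \<ge> 1 \<longrightarrow>
           (let \<alpha> = real s * exp (1 / (real l * real s)) in
             (\<lambda>n. \<bar>real_of_int (cf_p \<alpha> n) - \<alpha> * real_of_int (cf_q \<alpha> n)\<bar>) sums
               (exp (1 / (real l * real s)) * sqrt (pi * real s / real l)
                  * erf (1 / sqrt (real l * real s)))))
       \<and> (\<forall>(s::nat). s \<ge> 1 \<longrightarrow>
           (let \<alpha> = real s * exp (1 / real s) in
             (\<lambda>n. \<bar>real_of_int (cf_p \<alpha> n) - \<alpha> * real_of_int (cf_q \<alpha> n)\<bar>) sums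
               (exp (1 / real s) * sqrt (pi * real s) * erf (1 / sqrt (real s))
                  + real s * (1 - exp (1 / real s)) - 1)))"
  unfolding Let_def
  using scaled_exp_cf.sum_abs_cf_errors scaled_exp_cf.sum_abs_cf_errors_l_1[of 1]
  by (simp add: scaled_exp_cf_def)

end
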